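(* Let $n\ge2$ and let $(1,n,f_2,\dots,f_k)$ with $k\le\lfloor\frac{n-1}2\rfloor$ be a $K$-sequence. Then there is a proper ideal $\Delta\subset B_n$ such that $\mathrm{Bier}(B_n,\Delta)$ has exactly $2n$ vertices and $g_i(\mathrm{Bier}(B_n,\Delta))=f_i$ for $0\le i\le k$ (with $f_0=1,f_1=n$) and $g_i(\mathrm{Bier}(B_n,\Delta))=0$ for $k<i\le\lfloor\frac{n-1}2\rfloor$.
   Context: $B_n$ is the Boolean lattice of subsets of $[1,n]$. A proper ideal $\Delta\subset B_n$ is a nonempty family of subsets of $[1,n]$ closed under taking subsets with $[1,n]\notin\Delta$. The Bier sphere $\mathrm{Bier}(B_n,\Delta)$ is the simplicial complex whose faces are the pairs $(B,C)$ with $B\subsetneq C\subseteq[1,n]$, $B\in\Delta$, $C\notin\Delta$, with $(B',C')$ a face of $(B,C)$ iff $B'\subseteq B$ and $C\subseteq C'$; concretely $(B,C)$ is the vertex set $B\sqcup\{\bar d: d\notin C\}$ on $[1,n]\sqcup\{\bar1,\dots,\bar n\}$, and the face $(B,C)$ has $|B|+n-|C|$ vertices; all facets have $n-1$ vertices. For such a complex $\Gamma$, $f_j(\Gamma)$ is the number of faces with $j$ vertices, $h_i(\Gamma):=\sum_{j=0}^{n-1}(-1)^{i+j}\binom{n-1-j}{n-1-i}f_j(\Gamma)$ ($0\le i\le n-1$; $h_i:=0$ otherwise), and $g_i(\Gamma):=h_i(\Gamma)-h_{i-1}(\Gamma)$. A $K$-sequence is a sequence that is the $f$-vector (numbers of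 faces of each cardinality, starting with the empty face) of some finite simplicial complex. *)

theory Defs
  imports Main
begin

definition proper_ideal :: "nat \<Rightarrow> nat set set \<Rightarrow> bool" where
  "proper_ideal n \<Delta> \<longleftrightarrow>
     \<Delta> \<noteq> {} \<and> (\<forall>A\<in>\<Delta>. A \<subseteq> {1..n}) \<and>
     (\<forall>A\<in>\<Delta>. \<forall>B. B \<subseteq> A \<longrightarrow> B \<in> \<Delta>) \<and> {1..n} \<notin> \<Delta>"

text \<open>Faces of Bier(B_n, Delta) as vertex sets on [1,n] + [1,n]-bar:
  the face (B,C) has vertex set B (tagged Inl) plus the complement of C (tagged Inr).\<close>
definition bier_faces :: "nat \<Rightarrow> nat set set \<Rightarrow> (nat + nat) set set" where
  "bier_faces n \<Delta> =
     {Inl ` B \<union> Inr ` ({1..n} - C) | B C.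
        B \<subset> C \<and> C \<subseteq> {1..n} \<and> B \<in> \<Delta> \<and> C \<notin> \<Delta>}"

definition bier_f :: "nat \<Rightarrow> nat set set \<Rightarrow> nat \<Rightarrow> nat" where
  "bier_f n \<Delta> j = card {F \<in> bier_faces n \<Delta>. card F = j}"

definition bier_h :: "nat \<Rightarrow> nat set set \<Rightarrow> nat \<Rightarrow> int" where
  "bier_h n \<Delta> i =
     (if i \<le> n - 1 then
        (\<Sum>j = 0..n - 1. (-1) ^ (i + j) * int ((n - 1 - j) choose (n - 1 - i)) * int (bier_f n \<Delta> j))
      else 0)"

fun bier_g :: "nat \<Rightarrow> nat set set \<Rightarrow> nat \<Rightarrow> int" where
  "bier_g n \<Delta> 0 = bier_h n \<Delta> 0"
| "bier_g n \<Delta> (Suc i) = bier_h n \<Delta> (Suc i) - bier_h n \<Delta> i"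

definition simplicial_complex :: "nat set set \<Rightarrow> bool" where
  "simplicial_complex K \<longleftrightarrow> finite K \<and> {} \<in> K \<and> (\<forall>F\<in>K. finite F) \<and>
     (\<forall>F\<in>K. \<forall>G. G \<subseteq> F \<longrightarrow> G \<in> K)"

text \<open>(f 0, ..., f k) is a K-sequence: the f-vector of some finite simplicial complex,
  i.e. f j faces with j vertices for j \<le> k, and no faces with more than k vertices.\<close>
definition K_sequence :: "nat \<Rightarrow> (nat \<Rightarrow> nat) \<Rightarrow> bool" where
  "K_sequence k f \<longleftrightarrow> (\<exists>K. simplicial_complex K \<and>
      (\<forall>j\<le>k. card {F\<in>K. card F = j} = f j) \<and> (\<forall>F\<in>K. card F \<le> k))"

end

theory Submission
  imports Defs
begin

(* If every face A of the ideal satisfies card A + i < n, then h_i of the Bier sphere counts the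
   faces of the ideal with at most i elements.  Group the faces (B, C) of the sphere by B: supersets
   C of B that still lie in the ideal are too small to contribute, and the alternating sum over
   all strict supersets C of B collapses, by a binomial identity, to 1 if card B <= i and to 0
   otherwise.  Hence g_i of the sphere is the number of i-element faces of the ideal for
   i <= (n - 1) div 2.  A K-sequence with f_1 = n is realised by a complex on the vertex set
   {1..n}, which is the required ideal; its Bier sphere has f_1 = g_1 + n g_0 = 2n vertices. *)

definition h_coeff :: "nat \<Rightarrow> nat \<Rightarrow> nat \<Rightarrow> int" where
  "h_coeff n i j = (-1) ^ (i + j) * int ((n - 1 - j) choose (n - 1 - i))"

lemma bier_h_eq_sum_h_coeff:
  "i < n \<Longrightarrow> bier_h n \<Delta> i = (\<Sum>j = 0..n - 1. h_coeff n i j * int (bier_f n \<Delta> j))"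
  by (simp add: bier_h_def h_coeff_def)

lemma bier_h_eq_sum_atMost:
  assumes "i < n"
  shows "bier_h n \<Delta> i = (\<Sum>j\<le>i. h_coeff n i j * int (bier_f n \<Delta> j))"
proof -
  have "(\<Sum>j = 0..n - 1. h_coeff n i j * int (bier_f n \<Delta> j)) = (\<Sum>j = 0..i. h_coeff n i j * int (bier_f n \<Delta> j))"
    using assms by (intro sum.mono_neutral_right) (auto simp: h_coeff_def)
  then show ?thesis
    using assms by (simp add: bier_h_eq_sum_h_coeff atLeast0AtMost)
qed

lemma bier_f_1_eq_bier_g:
  assumes "2 \<le> n"
  shows "int (bier_f n \<Delta> 1) = bier_g n \<Delta> 1 + int n * bier_g n \<Delta> 0"
proof -
  have "(n - 1) choose (n - 2) = n - 1"
    using assms binomial_symmetric[of "n - 2" "n - 1"] by (simp add: numeral_2_eq_2)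
  then show ?thesis
    using assms bier_h_eq_sum_atMost[of 0 n \<Delta>] bier_h_eq_sum_atMost[of 1 n \<Delta>]
    by (simp add: h_coeff_def numeral_2_eq_2 algebra_simps)
qed

lemma sum_alternating_choose_mult_choose:
  "(\<Sum>j\<le>N. int (N choose j) * (-1) ^ (j + r) * int (j choose r)) = (if N = r then 1 else 0)"
proof (cases "r \<le> N")
  case False
  then show ?thesis by (intro trans[OF sum.neutral]) auto
next
  case True
  have "(\<Sum>j\<le>N. int (N choose j) * (-1) ^ (j + r) * int (j choose r))
      = (\<Sum>j=r..N. int (N choose j) * (-1) ^ (j + r) * int (j choose r))"
    by (rule sum.mono_neutral_right) auto
  also have "\<dots> = (\<Sum>m=0..N - r. int (N choose (m + r)) * (-1) ^ (m + r + r) * int ((m + r) choose r))"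
    using sum.shift_bounds_cl_nat_ivl[of _ 0 r "N - r"] True by simp
  also have "\<dots> = int (N choose r) * (\<Sum>m\<le>N - r. (-1) ^ m * int ((N - r) choose m))"
    unfolding sum_distrib_left atLeast0AtMost
  proof (rule sum.cong)
    fix m assume "m \<in> {..N - r}"
    then have "(N choose (m + r)) * ((m + r) choose r) = (N choose r) * ((N - r) choose m)"
      using choose_mult[of r "m + r" N] True by simp
    then have "int (N choose (m + r)) * int ((m + r) choose r) = int (N choose r) * int ((N - r) choose m)"
      by (metis of_nat_mult)
    moreover have "(-1::int) ^ (m + r + r) = (-1) ^ m"
      by (simp add: power_add flip: mult_2 power_mult)
    ultimately show "int (N choose (m + r)) * (-1) ^ (m + r + r) * int ((m + r) choose r)
        = int (N choose r) * ((-1) ^ m * int ((N - r) choose m))"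
      by (simp add: algebra_simps)
  qed simp
  also have "\<dots> = (if N = r then 1 else 0)"
    using choose_alternating_sum[of "N - r", where 'a=int] True by auto
  finally show ?thesis .
qed

lemma sum_alternating_choose_Suc_mult_choose:
  "(\<Sum>j<N. int (N choose Suc j) * (-1) ^ (j + r) * int (j choose r)) = (if r < N then 1 else 0)"
proof (induction N)
  case (Suc N)
  have "(\<Sum>j<Suc N. int (Suc N choose Suc j) * (-1) ^ (j + r) * int (j choose r))
     = (\<Sum>j<Suc N. int (N choose Suc j) * (-1) ^ (j + r) * int (j choose r))
       + (\<Sum>j<Suc N. int (N choose j) * (-1) ^ (j + r) * int (j choose r))"
    by (simp add: sum.distrib[symmetric] algebra_simps)
  also have "\<dots> = (\<Sum>j<N. int (N choose Suc j) * (-1) ^ (j + r) * int (j choose r))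
       + (\<Sum>j\<le>N. int (N choose j) * (-1) ^ (j + r) * int (j choose r))"
    by (simp flip: lessThan_Suc_atMost)
  finally show ?case
    using Suc.IH sum_alternating_choose_mult_choose[of N r] by auto
qed simp

lemma sum_nonempty_subsets_by_card:
  fixes g :: "nat \<Rightarrow> 'a::comm_semiring_1"
  assumes "finite S"
  shows "(\<Sum>D | D \<subseteq> S \<and> D \<noteq> {}. g (card D))
       = (\<Sum>j<card S. of_nat (card S choose Suc j) * g (Suc j))"
proof -
  let ?P = "{D. D \<subseteq> S \<and> D \<noteq> {}}"
  have card_P: "card D \<in> Suc ` {..<card S}" if "D \<in> ?P" for D
  proof -
    have "0 < card D" "card D \<le> card S"
      using that assms by (auto simp: card_gt_0_iff card_mono finite_subset)
    then show ?thesis by (auto simp: image_iff intro!: bexI[of _ "card D - 1"])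
  qed
  have "(\<Sum>D\<in>?P. g (card D)) = (\<Sum>d\<in>Suc ` {..<card S}. of_nat (card {D\<in>?P. card D = d}) * g d)"
    using assms card_P by (intro sum_fun_comp) auto
  also have "\<dots> = (\<Sum>j<card S. of_nat (card {D\<in>?P. card D = Suc j}) * g (Suc j))"
    by (simp add: sum.reindex)
  also have "\<dots> = (\<Sum>j<card S. of_nat (card S choose Suc j) * g (Suc j))"
  proof (rule sum.cong)
    fix j
    have "{D\<in>?P. card D = Suc j} = {D. D \<subseteq> S \<and> card D = Suc j}" by auto
    then show "of_nat (card {D\<in>?P. card D = Suc j}) * g (Suc j) = of_nat (card S choose Suc j) * g (Suc j)"
      using n_subsets[OF assms] by simp
  qed simp
  finally show ?thesis .
qed

lemma h_coeff_eq_0: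
  assumes "b < c" and "c + i < n"
  shows "h_coeff n i (b + (n - c)) = 0"
  using assms by (simp add: h_coeff_def)

lemma sum_h_coeff_strict_supersets:
  assumes "B \<subseteq> {1..n}" and "i < n"
  shows "(\<Sum>C | B \<subset> C \<and> C \<subseteq> {1..n}. h_coeff n i (card B + (n - card C)))
       = (if card B \<le> i then 1 else 0)"
proof -
  define S where "S = {1..n} - B"
  have "finite B" using assms(1) finite_subset by blast
  have "card B \<le> n" using card_mono[OF _ assms(1)] by simp
  have card_S: "card S = n - card B"
    using assms(1) by (simp add: S_def card_Diff_subset \<open>finite B\<close>)
  have "(\<Sum>C | B \<subset> C \<and> C \<subseteq> {1..n}. h_coeff n i (card B + (n - card C)))
      = (\<Sum>D | D \<subseteq> S \<and> D \<noteq> {}. h_coeff n i (n - card D))"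
  proof (rule sum.reindex_bij_witness[of _ "\<lambda>D. B \<union> D" "\<lambda>C. C - B"])
    fix C assume C: "C \<in> {C. B \<subset> C \<and> C \<subseteq> {1..n}}"
    then have "card (C - B) = card C - card B" and "card C \<le> n"
      using \<open>finite B\<close> by (auto simp: card_Diff_subset card_mono[of "{1..n}" C, simplified])
    moreover have "card B < card C"
      using C finite_subset[of C "{1..n}"] by (auto intro: psubset_card_mono)
    ultimately show "h_coeff n i (n - card (C - B)) = h_coeff n i (card B + (n - card C))"
      by (simp add: add.commute)
  qed (use assms(1) in \<open>auto simp: S_def\<close>)
  also have "\<dots> = (\<Sum>j<card S. int (card S choose Suc j) * h_coeff n i (n - Suc j))"
    using sum_nonempty_subsets_by_card[of S "\<lambda>d. h_coeff n i (n - d)"] by (simp add: S_def)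
  also have "\<dots> = (\<Sum>j<card S. int (card S choose Suc j) * (-1) ^ (j + (n - 1 - i)) * int (j choose (n - 1 - i)))"
  proof (rule sum.cong)
    fix j assume "j \<in> {..<card S}"
    then have "j < n" using card_S by simp
    then have "n - 1 - (n - Suc j) = j" and "even ((i + (n - Suc j)) + (j + (n - 1 - i)))"
      using assms(2) by auto
    then show "int (card S choose Suc j) * h_coeff n i (n - Suc j)
        = int (card S choose Suc j) * (-1) ^ (j + (n - 1 - i)) * int (j choose (n - 1 - i))"
      by (simp add: h_coeff_def minus_one_power_iff)
  qed simp
  also have "\<dots> = (if n - 1 - i < card S then 1 else 0)"
    by (rule sum_alternating_choose_Suc_mult_choose)
  finally show ?thesis
    using card_S \<open>card B \<le> n\<close> assms(2) by auto
qed

definition bier_pairs :: "nat \<Rightarrow> nat set set \<Rightarrow> (nat set \<times> nat set) set" where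
  "bier_pairs n \<Delta> = {(B, C). B \<in> \<Delta> \<and> B \<subseteq> C \<and> C \<subseteq> {1..n} \<and> C \<notin> \<Delta>}"

definition pair_face :: "nat \<Rightarrow> nat set \<times> nat set \<Rightarrow> (nat + nat) set" where
  "pair_face n = (\<lambda>(B, C). Inl ` B \<union> Inr ` ({1..n} - C))"

lemma bier_faces_eq_image_pair_face: "bier_faces n \<Delta> = pair_face n ` bier_pairs n \<Delta>"
  unfolding bier_faces_def bier_pairs_def pair_face_def
  by (auto simp: image_iff)

lemma inj_on_pair_face: "inj_on (pair_face n) (bier_pairs n \<Delta>)"
proof (rule inj_onI, clarify)
  fix B C B' C'
  assume "(B, C) \<in> bier_pairs n \<Delta>" "(B', C') \<in> bier_pairs n \<Delta>"
    and eq: "pair_face n (B, C) = pair_face n (B', C')"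
  then have "C \<subseteq> {1..n}" "C' \<subseteq> {1..n}" by (auto simp: bier_pairs_def)
  moreover have "B = Inl -` pair_face n (B, C)" "B' = Inl -` pair_face n (B', C')"
    and "{1..n} - C = Inr -` pair_face n (B, C)" "{1..n} - C' = Inr -` pair_face n (B', C')"
    by (auto simp: pair_face_def)
  ultimately show "B = B' \<and> C = C'"
    using eq by (metis Diff_Diff_Int inf.absorb_iff2)
qed

lemma finite_bier_pairs: "finite (bier_pairs n \<Delta>)"
  by (rule finite_subset[of _ "Pow {1..n} \<times> Pow {1..n}"]) (auto simp: bier_pairs_def)

lemma card_pair_face:
  assumes "(B, C) \<in> bier_pairs n \<Delta>"
  shows "card (pair_face n (B, C)) = card B + (n - card C)"
proof -
  have "B \<subseteq> {1..n}" "C \<subseteq> {1..n}" using assms by (auto simp: bier_pairs_def)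
  then have "finite B" "card ({1..n} - C) = n - card C"
    by (auto simp: finite_subset card_Diff_subset)
  moreover have "card (Inl ` B \<union> Inr ` ({1..n} - C))
      = card (Inl ` B :: (nat + nat) set) + card (Inr ` ({1..n} - C) :: (nat + nat) set)"
    using \<open>finite B\<close> by (intro card_Un_disjoint) auto
  ultimately show ?thesis
    by (simp add: pair_face_def card_image)
qed

lemma card_bier_pair_bounds:
  assumes "(B, C) \<in> bier_pairs n \<Delta>"
  shows "card B < card C" and "card C \<le> n"
proof -
  have "B \<subset> C" "C \<subseteq> {1..n}" using assms by (auto simp: bier_pairs_def)
  then show "card B < card C" "card C \<le> n"
    using card_mono[of "{1..n}" C] by (auto intro: psubset_card_mono finite_subset)
qed

lemma bier_h_eq_sum_bier_pairs:
  assumes "i < n"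
  shows "bier_h n \<Delta> i = (\<Sum>(B, C)\<in>bier_pairs n \<Delta>. h_coeff n i (card B + (n - card C)))"
proof -
  let ?w = "\<lambda>(B, C). card B + (n - card C)"
  have w: "card (pair_face n p) = ?w p" if "p \<in> bier_pairs n \<Delta>" for p
    using that card_pair_face by (cases p) auto
  have "?w ` bier_pairs n \<Delta> \<subseteq> {0..n - 1}"
    using card_bier_pair_bounds by fastforce
  then have "(\<Sum>p\<in>bier_pairs n \<Delta>. h_coeff n i (?w p))
      = (\<Sum>j = 0..n - 1. int (card {p \<in> bier_pairs n \<Delta>. ?w p = j}) * h_coeff n i j)"
    by (intro sum_fun_comp) (auto simp: finite_bier_pairs)
  also have "\<dots> = (\<Sum>j = 0..n - 1. h_coeff n i j * int (bier_f n \<Delta> j))"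
  proof (rule sum.cong)
    fix j
    have "{F \<in> bier_faces n \<Delta>. card F = j} = pair_face n ` {p \<in> bier_pairs n \<Delta>. ?w p = j}"
      using w by (auto simp: bier_faces_eq_image_pair_face)
    then have "bier_f n \<Delta> j = card {p \<in> bier_pairs n \<Delta>. ?w p = j}"
      unfolding bier_f_def by (auto intro!: card_image inj_on_subset[OF inj_on_pair_face])
    then show "int (card {p \<in> bier_pairs n \<Delta>. ?w p = j}) * h_coeff n i j = h_coeff n i j * int (bier_f n \<Delta> j)"
      by simp
  qed simp
  finally show ?thesis
    using assms by (simp add: bier_h_eq_sum_h_coeff split_def)
qed

lemma finite_proper_ideal: "proper_ideal n \<Delta> \<Longrightarrow> finite \<Delta>"
  unfolding proper_ideal_def by (meson Pow_iff finite_Pow_iff finite_atLeastAtMost finite_subset subsetI)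

lemma empty_in_proper_ideal: "proper_ideal n \<Delta> \<Longrightarrow> {} \<in> \<Delta>"
  unfolding proper_ideal_def by blast

lemma bier_h_eq_card_small_faces:
  assumes \<Delta>: "proper_ideal n \<Delta>" and small: "\<And>A. A \<in> \<Delta> \<Longrightarrow> card A + i < n"
  shows "bier_h n \<Delta> i = int (card {B \<in> \<Delta>. card B \<le> i})"
proof -
  have "i < n" using small[OF empty_in_proper_ideal[OF \<Delta>]] by simp
  have ideal_subset: "B \<subseteq> {1..n}" if "B \<in> \<Delta>" for B
    using \<Delta> that unfolding proper_ideal_def by blast
  have "bier_pairs n \<Delta> = Sigma \<Delta> (\<lambda>B. {C. B \<subseteq> C \<and> C \<subseteq> {1..n} \<and> C \<notin> \<Delta>})"
    by (auto simp: bier_pairs_def)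
  then have "bier_h n \<Delta> i
      = (\<Sum>B\<in>\<Delta>. \<Sum>C | B \<subseteq> C \<and> C \<subseteq> {1..n} \<and> C \<notin> \<Delta>. h_coeff n i (card B + (n - card C)))"
    using bier_h_eq_sum_bier_pairs[OF \<open>i < n\<close>] finite_proper_ideal[OF \<Delta>]
    by (simp add: sum.Sigma[symmetric] finite_subset[of _ "Pow {1..n}"])
  also have "\<dots> = (\<Sum>B\<in>\<Delta>. \<Sum>C | B \<subset> C \<and> C \<subseteq> {1..n}. h_coeff n i (card B + (n - card C)))"
  proof (rule sum.cong[OF refl])
    fix B assume "B \<in> \<Delta>"
    have vanish: "h_coeff n i (card B + (n - card C)) = 0" if "B \<subset> C" "C \<subseteq> {1..n}" "C \<in> \<Delta>" for C
    proof -
      have "card B < card C"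
        using that finite_subset[of C "{1..n}"] by (auto intro: psubset_card_mono)
      then show ?thesis using h_coeff_eq_0 small[OF that(3)] by blast
    qed
    show "(\<Sum>C | B \<subseteq> C \<and> C \<subseteq> {1..n} \<and> C \<notin> \<Delta>. h_coeff n i (card B + (n - card C)))
        = (\<Sum>C | B \<subset> C \<and> C \<subseteq> {1..n}. h_coeff n i (card B + (n - card C)))"
    proof (rule sum.mono_neutral_left)
      show "finite {C. B \<subset> C \<and> C \<subseteq> {1..n}}"
        by (rule finite_subset[of _ "Pow {1..n}"]) auto
    qed (use \<open>B \<in> \<Delta>\<close> vanish in auto)
  qed
  also have "\<dots> = (\<Sum>B\<in>\<Delta>. if card B \<le> i then 1 else 0)"
    using ideal_subset \<open>i < n\<close> sum_h_coeff_strict_supersets by (intro sum.cong) auto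
  also have "\<dots> = int (card {B \<in> \<Delta>. card B \<le> i})"
    using finite_proper_ideal[OF \<Delta>] by (simp add: sum.If_cases Int_def)
  finally show ?thesis .
qed

lemma bier_g_eq_card_faces:
  assumes \<Delta>: "proper_ideal n \<Delta>" and small: "\<And>A. A \<in> \<Delta> \<Longrightarrow> card A + i < n"
  shows "bier_g n \<Delta> i = int (card {A \<in> \<Delta>. card A = i})"
proof (cases i)
  case 0
  then show ?thesis
    using bier_h_eq_card_small_faces[OF assms] by simp
next
  case (Suc j)
  have "{A \<in> \<Delta>. card A \<le> Suc j} = {A \<in> \<Delta>. card A \<le> j} \<union> {A \<in> \<Delta>. card A = Suc j}"
    by auto
  then have "card {A \<in> \<Delta>. card A \<le> Suc j} = card {A \<in> \<Delta>. card A \<le> j} + card {A \<in> \<Delta>. card A = Suc j}"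
    using finite_proper_ideal[OF \<Delta>] by (simp add: card_Un_disjoint disjoint_iff)
  moreover have "\<And>A. A \<in> \<Delta> \<Longrightarrow> card A + j < n"
    using small Suc by fastforce
  ultimately show ?thesis
    using Suc bier_h_eq_card_small_faces[OF \<Delta>] small by simp
qed

lemma simplicial_complex_image:
  assumes "simplicial_complex K"
  shows "simplicial_complex ((`) \<sigma> ` K)"
  unfolding simplicial_complex_def
proof (intro conjI ballI allI impI)
  show "finite ((`) \<sigma> ` K)" "{} \<in> (`) \<sigma> ` K"
    using assms unfolding simplicial_complex_def by auto
next
  fix A assume "A \<in> (`) \<sigma> ` K"
  then show "finite A" using assms unfolding simplicial_complex_def by auto
next
  fix A G assume A: "A \<in> (`) \<sigma> ` K" and "G \<subseteq> A"
  from A obtain F where "F \<in> K" and "A = \<sigma> ` F" by (rule imageE)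
  have "{x \<in> F. \<sigma> x \<in> G} \<in> K"
    using assms \<open>F \<in> K\<close> unfolding simplicial_complex_def by (metis (no_types, lifting) mem_Collect_eq subsetI)
  moreover have "G = \<sigma> ` {x \<in> F. \<sigma> x \<in> G}"
    using \<open>G \<subseteq> A\<close> \<open>A = \<sigma> ` F\<close> by blast
  ultimately show "G \<in> (`) \<sigma> ` K" by (rule rev_image_eqI)
qed

lemma card_faces_image:
  assumes "inj_on \<sigma> (\<Union>K)"
  shows "card {A \<in> (`) \<sigma> ` K. card A = j} = card {F \<in> K. card F = j}"
proof -
  have "card (\<sigma> ` F) = card F" if "F \<in> K" for F
    using that by (intro card_image inj_on_subset[OF assms]) auto
  then have "{A \<in> (`) \<sigma> ` K. card A = j} = (`) \<sigma> ` {F \<in> K. card F = j}"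
    by auto
  moreover have "inj_on ((`) \<sigma>) K"
    using assms inj_on_image[of \<sigma> K] by simp
  ultimately show ?thesis
    by (simp add: card_image inj_on_subset)
qed

lemma card_vertices_simplicial_complex:
  assumes "simplicial_complex K"
  shows "card {F \<in> K. card F = 1} = card (\<Union>K)"
proof -
  have "{F \<in> K. card F = 1} = (\<lambda>v. {v}) ` \<Union>K"
  proof
    show "{F \<in> K. card F = 1} \<subseteq> (\<lambda>v. {v}) ` \<Union>K"
      by (auto simp: card_1_singleton_iff)
    show "(\<lambda>v. {v}) ` \<Union>K \<subseteq> {F \<in> K. card F = 1}"
      using assms unfolding simplicial_complex_def by auto
  qed
  then show ?thesis by (simp add: card_image)
qed

lemma K_sequence_on_interval:
  assumes "K_sequence k f" and "1 \<le> k" and "f 1 = n"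
  obtains \<Delta> where "simplicial_complex \<Delta>" and "\<Union>\<Delta> \<subseteq> {1..n}"
    and "\<And>j. j \<le> k \<Longrightarrow> card {A \<in> \<Delta>. card A = j} = f j"
    and "\<And>A. A \<in> \<Delta> \<Longrightarrow> card A \<le> k"
proof -
  obtain K where K: "simplicial_complex K" and counts: "\<And>j. j \<le> k \<Longrightarrow> card {F \<in> K. card F = j} = f j"
    and small: "\<And>F. F \<in> K \<Longrightarrow> card F \<le> k"
    using assms(1) unfolding K_sequence_def by blast
  have "finite (\<Union>K)" using K unfolding simplicial_complex_def by blast
  moreover have "card (\<Union>K) = n"
    using card_vertices_simplicial_complex[OF K] counts[OF assms(2)] assms(3) by simp
  ultimately obtain \<sigma> where \<sigma>: "bij_betw \<sigma> (\<Union>K) {1..n}"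
    by (metis card_atLeastAtMost diff_Suc_1 finite_atLeastAtMost finite_same_card_bij)
  then have "inj_on \<sigma> (\<Union>K)" by (rule bij_betw_imp_inj_on)
  show ?thesis
  proof (rule that[of "(`) \<sigma> ` K"])
    show "simplicial_complex ((`) \<sigma> ` K)" using K by (rule simplicial_complex_image)
    show "\<Union>((`) \<sigma> ` K) \<subseteq> {1..n}" using \<sigma> by (auto simp: bij_betw_def)
    show "card {A \<in> (`) \<sigma> ` K. card A = j} = f j" if "j \<le> k" for j
      using card_faces_image[OF \<open>inj_on \<sigma> (\<Union>K)\<close>] counts[OF that] by simp
    show "card A \<le> k" if A: "A \<in> (`) \<sigma> ` K" for A
    proof -
      from A obtain F where "F \<in> K" "A = \<sigma> ` F" by (rule imageE)
      then show ?thesis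
        using small[of F] card_image_le[of F \<sigma>] K unfolding simplicial_complex_def by auto
    qed
  qed
qed

lemma proper_ideal_if_simplicial_complex:
  assumes "simplicial_complex \<Delta>" and "\<Union>\<Delta> \<subseteq> {1..n}" and "{1..n} \<notin> \<Delta>"
  shows "proper_ideal n \<Delta>"
  using assms unfolding simplicial_complex_def proper_ideal_def by blast

theorem corollary13:
  fixes n k :: nat and f :: "nat \<Rightarrow> nat"
  assumes "n \<ge> 2" and "1 \<le> k" and "k \<le> (n - 1) div 2"
    and "f 0 = 1" and "f 1 = n" and "K_sequence k f"
  shows "\<exists>\<Delta>. proper_ideal n \<Delta> \<and> bier_f n \<Delta> 1 = 2 * n \<and>
           (\<forall>i\<le>k. bier_g n \<Delta> i = int (f i)) \<and>
           (\<forall>i. k < i \<and> i \<le> (n - 1) div 2 \<longrightarrow> bier_g n \<Delta> i = 0)"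
proof -
  obtain \<Delta> where complex: "simplicial_complex \<Delta>" "\<Union>\<Delta> \<subseteq> {1..n}"
    and counts: "\<And>j. j \<le> k \<Longrightarrow> card {A \<in> \<Delta>. card A = j} = f j"
    and small: "\<And>A. A \<in> \<Delta> \<Longrightarrow> card A \<le> k"
    using K_sequence_on_interval[OF assms(6,2,5)] by blast
  have "{1..n} \<notin> \<Delta>"
  proof -
    have "k < n" using assms(1,3) by linarith
    then show ?thesis using small[of "{1..n}"] by auto
  qed
  with complex have \<Delta>: "proper_ideal n \<Delta>"
    by (rule proper_ideal_if_simplicial_complex)
  have g: "bier_g n \<Delta> i = int (card {A \<in> \<Delta>. card A = i})" if "i \<le> (n - 1) div 2" for i
    using that assms(1,3) small by (intro bier_g_eq_card_faces[OF \<Delta>]) fastforce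
  have "\<forall>i\<le>k. bier_g n \<Delta> i = int (f i)"
    using g counts assms(3) by simp
  moreover have "\<forall>i. k < i \<and> i \<le> (n - 1) div 2 \<longrightarrow> bier_g n \<Delta> i = 0"
  proof (intro allI impI)
    fix i assume i: "k < i \<and> i \<le> (n - 1) div 2"
    then have "{A \<in> \<Delta>. card A = i} = {}" using small by fastforce
    then show "bier_g n \<Delta> i = 0" using g i by (metis card.empty of_nat_0)
  qed
  moreover have "bier_f n \<Delta> 1 = 2 * n"
    using bier_f_1_eq_bier_g[OF assms(1), of \<Delta>] g[of 0] g[of 1] counts[of 0] counts[of 1] assms(2-5)
    by simp
  ultimately show ?thesis
    using \<Delta> by blast
qed

end
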